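(* Let $\mathtt{L}\in\mathcal{L}$ be a line of $\mathbb{S}$ and let $\alpha\in P\cup P'$. If $\alpha$ has distance $2$ (in $\mathbb{S}$) from two points of $\mathtt{L}$, then $\alpha$ is collinear in $\mathbb{S}$ with the third point of $\mathtt{L}$.
   Context: Let $S=(P,L)$ and $S'=(P',L')$ be generalized quadrangles of order $(2,2)$ (every line has 3 points, every point lies on 3 lines, and for each point $x$ and line $l\not\ni x$ exactly one point of $l$ is collinear with $x$), with an isomorphism $x\mapsto x'$ from $S$ to $S'$. In a point-line geometry, $x^{\perp}$ is $x$ together with all points collinear with $x$, and $A^{\perp}=\bigcap_{a\in A}a^{\perp}$. A triad is a set of three pairwise non-collinear points, complete if $|T^{\perp}|=3$. Let $\mathcal{P}=\{(x,y')\in P\times P':y'\in x'^{\perp}\}$ and $\mathcal{L}$ the set of all $3$-subsets $\{(x,u'),(y,v'),(z,w')\}$ of $\mathcal{P}$ where $T=\{x,y,z\}$ (three distinct points) is a line or complete triad of $S$ and $\{u',v',w'\}=T'^{\perp}$ in $S'$ with $u',v',w'$ distinct. The geometry $\mathbb{S}=(\mathbb{P},\mathbb{L})$ has point set $\mathbb{P}=\mathcal{P}\cup P\cup P'$ (disjoint union) and line set $\mathcal{L}\cup\{\{x,(x,u'),u'\}:(x,u')\in\mathcal{P}\}$. Distances are in the collinearity graph of $\mathbb{S}$. *)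

theory Defs
  imports Main
begin

definition collinear :: "'a set set \<Rightarrow> 'a \<Rightarrow> 'a \<Rightarrow> bool" where
  "collinear L x y \<longleftrightarrow> x \<noteq> y \<and> (\<exists>l\<in>L. x \<in> l \<and> y \<in> l)"

definition perp :: "'a set \<Rightarrow> 'a set set \<Rightarrow> 'a \<Rightarrow> 'a set" where
  "perp P L x = {x} \<union> {y\<in>P. collinear L x y}"

definition perp_set :: "'a set \<Rightarrow> 'a set set \<Rightarrow> 'a set \<Rightarrow> 'a set" where
  "perp_set P L A = {y\<in>P. \<forall>a\<in>A. y \<in> perp P L a}"

definition GQ22 :: "'a set \<Rightarrow> 'a set set \<Rightarrow> bool" where
  "GQ22 P L \<longleftrightarrow>
     (\<forall>l\<in>L. l \<subseteq> P \<and> card l = 3) \<and>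
     (\<forall>x\<in>P. card {l\<in>L. x \<in> l} = 3) \<and>
     (\<forall>x\<in>P. \<forall>y\<in>P. x \<noteq> y \<longrightarrow> card {l\<in>L. x \<in> l \<and> y \<in> l} \<le> 1) \<and>
     (\<forall>x\<in>P. \<forall>l\<in>L. x \<notin> l \<longrightarrow> (\<exists>!y. y \<in> l \<and> collinear L x y))"

definition is_triad :: "'a set \<Rightarrow> 'a set set \<Rightarrow> 'a set \<Rightarrow> bool" where
  "is_triad P L T \<longleftrightarrow> T \<subseteq> P \<and> card T = 3 \<and>
     (\<forall>x\<in>T. \<forall>y\<in>T. \<not> collinear L x y)"

definition complete_triad :: "'a set \<Rightarrow> 'a set set \<Rightarrow> 'a set \<Rightarrow> bool" where
  "complete_triad P L T \<longleftrightarrow> is_triad P L T \<and> card (perp_set P L T) = 3"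

definition GQ_iso :: "'a set \<Rightarrow> 'a set set \<Rightarrow> 'b set \<Rightarrow> 'b set set \<Rightarrow> ('a \<Rightarrow> 'b) \<Rightarrow> bool" where
  "GQ_iso P L P' L' f \<longleftrightarrow> bij_betw f P P' \<and> (\<lambda>l. f ` l) ` L = L'"

(* points of the geometry \<bbbS>: disjoint union of \<P>, P and P' *)
datatype ('a, 'b) bpt = PP 'a 'b | Pt 'a | Pt' 'b

definition calP :: "'a set \<Rightarrow> 'a set set \<Rightarrow> 'b set \<Rightarrow> 'b set set \<Rightarrow> ('a \<Rightarrow> 'b) \<Rightarrow> ('a \<times> 'b) set" where
  "calP P L P' L' f = {(x, y). x \<in> P \<and> y \<in> perp P' L' (f x)}"

definition calL :: "'a set \<Rightarrow> 'a set set \<Rightarrow> 'b set \<Rightarrow> 'b set set \<Rightarrow> ('a \<Rightarrow> 'b) \<Rightarrow> ('a, 'b) bpt set set" where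
  "calL P L P' L' f = {{PP x u, PP y v, PP z w} | x y z u v w.
      (x, u) \<in> calP P L P' L' f \<and> (y, v) \<in> calP P L P' L' f \<and> (z, w) \<in> calP P L P' L' f \<and>
      x \<noteq> y \<and> x \<noteq> z \<and> y \<noteq> z \<and>
      ({x, y, z} \<in> L \<or> complete_triad P L {x, y, z}) \<and>
      u \<noteq> v \<and> u \<noteq> w \<and> v \<noteq> w \<and>
      {u, v, w} = perp_set P' L' (f ` {x, y, z})}"

definition bbP :: "'a set \<Rightarrow> 'a set set \<Rightarrow> 'b set \<Rightarrow> 'b set set \<Rightarrow> ('a \<Rightarrow> 'b) \<Rightarrow> ('a, 'b) bpt set" where
  "bbP P L P' L' f = (\<lambda>(x, y). PP x y) ` calP P L P' L' f \<union> Pt ` P \<union> Pt' ` P'"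

definition bbL :: "'a set \<Rightarrow> 'a set set \<Rightarrow> 'b set \<Rightarrow> 'b set set \<Rightarrow> ('a \<Rightarrow> 'b) \<Rightarrow> ('a, 'b) bpt set set" where
  "bbL P L P' L' f = calL P L P' L' f \<union>
     {{Pt x, PP x u, Pt' u} | x u. (x, u) \<in> calP P L P' L' f}"

definition dist2 :: "'c set set \<Rightarrow> 'c \<Rightarrow> 'c \<Rightarrow> bool" where
  "dist2 LL a b \<longleftrightarrow> a \<noteq> b \<and> \<not> collinear LL a b \<and>
     (\<exists>c. collinear LL a c \<and> collinear LL c b)"

end

theory Submission
  imports Defs
begin

text \<open>
  A path \<open>Pt a \<dash> c \<dash> PP x u\<close> in \<open>\<bbbS>\<close> forces \<open>u \<in> a'\<^sup>\<perp>\<close>. So if \<open>Pt a\<close> has distance 2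
  from \<open>(x,u)\<close> and \<open>(y,v)\<close> on a line of \<open>\<L>\<close>, then \<open>a'\<close> lies in \<open>{u,v}\<^sup>\<perp>\<close>, which has at most
  three points and already contains \<open>T' = {x',y',z'}\<close>; hence \<open>a \<in> T\<close>, and \<open>a \<noteq> x, y\<close> because
  distance 2 excludes collinearity, so \<open>a = z\<close> and \<open>Pt a\<close> is collinear with \<open>(z,w)\<close>.
  Dually, for \<open>Pt' b\<close> one gets \<open>b \<in> {x',y'}\<^sup>\<perp> = {u,v,w}\<close>, hence \<open>b = w\<close>.
\<close>

lemma collinear_commute: "collinear L x y \<longleftrightarrow> collinear L y x"
  unfolding collinear_def by blast

lemma mem_perp_iff: "y \<in> perp P L x \<longleftrightarrow> y = x \<or> (y \<in> P \<and> collinear L x y)"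
  unfolding perp_def by auto

lemma perp_commute:
  assumes "x \<in> P" "y \<in> P"
  shows "x \<in> perp P L y \<longleftrightarrow> y \<in> perp P L x"
  using assms collinear_commute unfolding mem_perp_iff by metis

lemma mem_perp_set_pair_iff:
  "y \<in> perp_set P L {p, q} \<longleftrightarrow> y \<in> P \<and> y \<in> perp P L p \<and> y \<in> perp P L q"
  unfolding perp_set_def by auto

lemma GQ22_card_line: "GQ22 P L \<Longrightarrow> l \<in> L \<Longrightarrow> card l = 3"
  unfolding GQ22_def by simp

lemma GQ22_card_lines_through: "GQ22 P L \<Longrightarrow> x \<in> P \<Longrightarrow> card {l \<in> L. x \<in> l} = 3"
  unfolding GQ22_def by simp

lemma GQ22_ex1_collinear:
  "GQ22 P L \<Longrightarrow> x \<in> P \<Longrightarrow> l \<in> L \<Longrightarrow> x \<notin> l \<Longrightarrow> \<exists>!y. y \<in> l \<and> collinear L x y"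
  unfolding GQ22_def by simp

lemma GQ22_finite_card_perp_set_pair:
  assumes G: "GQ22 P L" and "p \<in> P" "q \<in> P" "p \<noteq> q"
  shows "finite (perp_set P L {p, q}) \<and> card (perp_set P L {p, q}) \<le> 3"
proof (cases "collinear L p q")
  case True
  then obtain l where l: "l \<in> L" "p \<in> l" "q \<in> l" unfolding collinear_def by blast
  have "card l = 3" using GQ22_card_line[OF G l(1)] .
  then have "finite l" by (simp add: card_ge_0_finite)
  moreover have "perp_set P L {p, q} \<subseteq> l"
  proof
    fix r assume r: "r \<in> perp_set P L {p, q}"
    show "r \<in> l"
    proof (rule ccontr)
      assume "r \<notin> l"
      moreover from this r l have "r \<in> P" "collinear L r p" "collinear L r q"
        using collinear_commute unfolding mem_perp_set_pair_iff mem_perp_iff by metis+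
      ultimately show False
        using GQ22_ex1_collinear[OF G _ l(1)] l \<open>p \<noteq> q\<close> by blast
    qed
  qed
  ultimately show ?thesis using \<open>card l = 3\<close> by (metis card_mono finite_subset)
next
  case False
  define lines_p where "lines_p = {m \<in> L. p \<in> m}"
  define foot where "foot m = (THE y. y \<in> m \<and> collinear L q y)" for m
  have "card lines_p = 3" using GQ22_card_lines_through[OF G \<open>p \<in> P\<close>] by (simp add: lines_p_def)
  then have "finite lines_p" by (simp add: card_ge_0_finite)
  have "perp_set P L {p, q} \<subseteq> foot ` lines_p"
  proof
    fix r assume r: "r \<in> perp_set P L {p, q}"
    with False \<open>p \<noteq> q\<close> have "collinear L p r" "collinear L q r"
      using collinear_commute unfolding mem_perp_set_pair_iff mem_perp_iff by metis+
    then obtain m where m: "m \<in> L" "p \<in> m" "r \<in> m" unfolding collinear_def by blast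
    with False \<open>p \<noteq> q\<close> have "q \<notin> m" unfolding collinear_def by blast
    then have "\<exists>!y. y \<in> m \<and> collinear L q y" using GQ22_ex1_collinear[OF G \<open>q \<in> P\<close> m(1)] by blast
    then have "foot m = r" unfolding foot_def
      by (rule the1_equality) (use m(3) \<open>collinear L q r\<close> in blast)
    then show "r \<in> foot ` lines_p" using m unfolding lines_p_def by blast
  qed
  with \<open>finite lines_p\<close> \<open>card lines_p = 3\<close> show ?thesis
    by (metis card_image_le card_mono finite_imageI finite_subset order_trans)
qed

lemma GQ22_mem_perp_set_pair:
  assumes "GQ22 P L" "p \<in> P" "q \<in> P" "p \<noteq> q"
    and "{r1, r2, r3} \<subseteq> perp_set P L {p, q}" "r1 \<noteq> r2" "r1 \<noteq> r3" "r2 \<noteq> r3"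
    and "x \<in> perp_set P L {p, q}"
  shows "x \<in> {r1, r2, r3}"
proof -
  have "card {r1, r2, r3} = 3" using assms(6-8) by simp
  then have "{r1, r2, r3} = perp_set P L {p, q}"
    using assms(5) GQ22_finite_card_perp_set_pair[OF assms(1-4)] by (metis card_seteq)
  with assms(9) show ?thesis by simp
qed

lemma calL_three_points:
  assumes "Ln \<in> calL P L P' L' f" "p1 \<in> Ln" "p2 \<in> Ln" "p3 \<in> Ln"
    "p1 \<noteq> p2" "p1 \<noteq> p3" "p2 \<noteq> p3"
  obtains a1 a2 a3 b1 b2 b3 where "p1 = PP a1 b1" "p2 = PP a2 b2" "p3 = PP a3 b3"
    "a1 \<noteq> a2" "a1 \<noteq> a3" "a2 \<noteq> a3" "b1 \<noteq> b2" "b1 \<noteq> b3" "b2 \<noteq> b3"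
    "a1 \<in> P" "a2 \<in> P" "a3 \<in> P" "{b1, b2, b3} = perp_set P' L' (f ` {a1, a2, a3})"
proof -
  obtain x y z u v w where Ln: "Ln = {PP x u, PP y v, PP z w}"
    and c: "(x, u) \<in> calP P L P' L' f" "(y, v) \<in> calP P L P' L' f" "(z, w) \<in> calP P L P' L' f"
      "x \<noteq> y" "x \<noteq> z" "y \<noteq> z" "u \<noteq> v" "u \<noteq> w" "v \<noteq> w"
    and pe: "{u, v, w} = perp_set P' L' (f ` {x, y, z})"
    using assms(1) unfolding calL_def by blast
  have "x \<in> P" "y \<in> P" "z \<in> P" using c(1-3) unfolding calP_def by auto
  \<comment> \<open>All orderings of \<open>pe\<close>, so that \<open>blast\<close> can match any assignment of \<open>p1, p2, p3\<close>.\<close>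
  moreover have "{v, u, w} = perp_set P' L' (f ` {y, x, z})"
    "{w, v, u} = perp_set P' L' (f ` {z, y, x})" "{u, w, v} = perp_set P' L' (f ` {x, z, y})"
    "{v, w, u} = perp_set P' L' (f ` {y, z, x})" "{w, u, v} = perp_set P' L' (f ` {z, x, y})"
    using pe by (simp_all only: insert_commute)
  moreover have "p1 = PP x u \<or> p1 = PP y v \<or> p1 = PP z w" "p2 = PP x u \<or> p2 = PP y v \<or> p2 = PP z w"
    "p3 = PP x u \<or> p3 = PP y v \<or> p3 = PP z w" using assms(2-4) Ln by auto
  ultimately show ?thesis using that assms(5-7) c(4-) pe by (elim disjE) blast+
qed

lemma calL_perp:
  assumes "m \<in> calL P L P' L' f" "PP p q \<in> m" "PP p' q' \<in> m"
  shows "q \<in> perp P' L' (f p')"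
proof -
  obtain x y z u v w where m: "m = {PP x u, PP y v, PP z w}"
    and uvw: "{u, v, w} = perp_set P' L' (f ` {x, y, z})"
    using assms(1) unfolding calL_def by blast
  have "q \<in> {u, v, w}" "p' \<in> {x, y, z}" using assms(2,3) m by auto
  then show ?thesis using uvw unfolding perp_set_def by auto
qed

lemma calL_not_Pt: "m \<in> calL P L P' L' f \<Longrightarrow> Pt a \<notin> m \<and> Pt' b \<notin> m"
  unfolding calL_def by auto

lemma bbL_cases:
  "m \<in> bbL P L P' L' f \<Longrightarrow> m \<in> calL P L P' L' f \<or>
     (\<exists>x u. (x, u) \<in> calP P L P' L' f \<and> m = {Pt x, PP x u, Pt' u})"
  unfolding bbL_def by blast

lemma collinear_Pt_PP:
  assumes "(x, u) \<in> calP P L P' L' f"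
  shows "collinear (bbL P L P' L' f) (Pt x) (PP x u)"
    and "collinear (bbL P L P' L' f) (Pt' u) (PP x u)"
  using assms unfolding collinear_def bbL_def by blast+

lemma path_Pt_PP_perp:
  assumes "collinear (bbL P L P' L' f) (Pt a) c" "collinear (bbL P L P' L' f) c (PP x u)"
  shows "u \<in> perp P' L' (f a)"
proof -
  obtain m where m: "m \<in> bbL P L P' L' f" "Pt a \<in> m" "c \<in> m" "Pt a \<noteq> c"
    using assms(1) unfolding collinear_def by blast
  obtain m2 where m2: "m2 \<in> bbL P L P' L' f" "c \<in> m2" "PP x u \<in> m2" "c \<noteq> PP x u"
    using assms(2) unfolding collinear_def by blast
  obtain t where t: "(a, t) \<in> calP P L P' L' f" "m = {Pt a, PP a t, Pt' t}"
    using bbL_cases[OF m(1)] calL_not_Pt m(2) by fastforce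
  with m have c: "c = PP a t \<or> c = Pt' t" by auto
  show ?thesis
  proof (cases "m2 \<in> calL P L P' L' f")
    case True
    with c m2(2) have "c = PP a t" using calL_not_Pt by metis
    then show ?thesis using calL_perp[OF True m2(3)] m2(2) by blast
  next
    case False
    then obtain s' t' where "m2 = {Pt s', PP s' t', Pt' t'}" using bbL_cases[OF m2(1)] by blast
    with c m2(2-4) have "u = t" by auto
    then show ?thesis using t(1) unfolding calP_def by auto
  qed
qed

lemma path_Pt'_PP_perp:
  assumes "collinear (bbL P L P' L' f) (Pt' b) c" "collinear (bbL P L P' L' f) c (PP x u)"
  shows "b \<in> perp P' L' (f x)"
proof -
  obtain m where m: "m \<in> bbL P L P' L' f" "Pt' b \<in> m" "c \<in> m" "Pt' b \<noteq> c"
    using assms(1) unfolding collinear_def by blast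
  obtain m2 where m2: "m2 \<in> bbL P L P' L' f" "c \<in> m2" "PP x u \<in> m2" "c \<noteq> PP x u"
    using assms(2) unfolding collinear_def by blast
  obtain s where s: "(s, b) \<in> calP P L P' L' f" "m = {Pt s, PP s b, Pt' b}"
    using bbL_cases[OF m(1)] calL_not_Pt m(2) by fastforce
  with m have c: "c = PP s b \<or> c = Pt s" by auto
  show ?thesis
  proof (cases "m2 \<in> calL P L P' L' f")
    case True
    with c m2(2) have "c = PP s b" using calL_not_Pt by metis
    then show ?thesis using calL_perp[OF True _ m2(3)] m2(2) by blast
  next
    case False
    then obtain s' t' where "m2 = {Pt s', PP s' t', Pt' t'}" using bbL_cases[OF m2(1)] by blast
    with c m2(2-4) have "x = s" by auto
    then show ?thesis using s(1) unfolding calP_def by auto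
  qed
qed

lemma dist2_Pt_calL_collinear:
  assumes G': "GQ22 P' L'" and f: "bij_betw f P P'"
    and Ln: "Ln \<in> calL P L P' L' f" "p1 \<in> Ln" "p2 \<in> Ln" "p3 \<in> Ln"
    and "p1 \<noteq> p2" "p1 \<noteq> p3" "p2 \<noteq> p3" and "a \<in> P"
    and d1: "dist2 (bbL P L P' L' f) (Pt a) p1" and d2: "dist2 (bbL P L P' L' f) (Pt a) p2"
  shows "collinear (bbL P L P' L' f) (Pt a) p3"
proof -
  obtain a1 a2 a3 b1 b2 b3 where p: "p1 = PP a1 b1" "p2 = PP a2 b2" "p3 = PP a3 b3"
    and neq: "a1 \<noteq> a2" "a1 \<noteq> a3" "a2 \<noteq> a3" "b1 \<noteq> b2"
    and aP: "a1 \<in> P" "a2 \<in> P" "a3 \<in> P" and b: "{b1, b2, b3} = perp_set P' L' (f ` {a1, a2, a3})"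
    using calL_three_points[OF Ln \<open>p1 \<noteq> p2\<close> \<open>p1 \<noteq> p3\<close> \<open>p2 \<noteq> p3\<close>] by metis
  have inj: "inj_on f P" and fP: "\<And>x. x \<in> P \<Longrightarrow> f x \<in> P'"
    using f by (auto simp: bij_betw_def)
  have bP: "b1 \<in> P'" "b2 \<in> P'" using b unfolding perp_set_def by auto
  have calP: "(a', b') \<in> calP P L P' L' f" if "a' \<in> {a1, a2, a3}" "b' \<in> {b1, b2, b3}" for a' b'
    using that aP b unfolding calP_def perp_set_def by blast
  obtain c1 c2 where
    "collinear (bbL P L P' L' f) (Pt a) c1" "collinear (bbL P L P' L' f) c1 p1"
    "collinear (bbL P L P' L' f) (Pt a) c2" "collinear (bbL P L P' L' f) c2 p2"
    using d1 d2 unfolding dist2_def by blast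
  then have "b1 \<in> perp P' L' (f a)" "b2 \<in> perp P' L' (f a)"
    using path_Pt_PP_perp p by metis+
  then have "f a \<in> perp_set P' L' {b1, b2}"
    using perp_commute bP fP[OF \<open>a \<in> P\<close>] unfolding mem_perp_set_pair_iff by metis
  moreover have "f a' \<in> perp_set P' L' {b1, b2}" if "a' \<in> {a1, a2, a3}" for a'
  proof -
    have "b1 \<in> perp P' L' (f a')" "b2 \<in> perp P' L' (f a')" using b that unfolding perp_set_def by auto
    moreover have "f a' \<in> P'" using fP aP that by blast
    ultimately show ?thesis using perp_commute bP unfolding mem_perp_set_pair_iff by metis
  qed
  moreover have "f a1 \<noteq> f a2" "f a1 \<noteq> f a3" "f a2 \<noteq> f a3"
    using inj aP neq by (metis inj_on_def)+
  ultimately have "f a \<in> f ` {a1, a2, a3}"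
    using GQ22_mem_perp_set_pair[OF G' bP \<open>b1 \<noteq> b2\<close>] by simp
  then have "a \<in> {a1, a2, a3}" using inj aP \<open>a \<in> P\<close> by (auto simp: inj_on_def)
  moreover have "a \<noteq> a1" "a \<noteq> a2"
    using d1 d2 collinear_Pt_PP(1)[OF calP] p unfolding dist2_def by auto
  ultimately show ?thesis using collinear_Pt_PP(1)[OF calP] p by auto
qed

lemma dist2_Pt'_calL_collinear:
  assumes G': "GQ22 P' L'" and f: "bij_betw f P P'"
    and Ln: "Ln \<in> calL P L P' L' f" "p1 \<in> Ln" "p2 \<in> Ln" "p3 \<in> Ln"
    and "p1 \<noteq> p2" "p1 \<noteq> p3" "p2 \<noteq> p3" and "b \<in> P'"
    and d1: "dist2 (bbL P L P' L' f) (Pt' b) p1" and d2: "dist2 (bbL P L P' L' f) (Pt' b) p2"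
  shows "collinear (bbL P L P' L' f) (Pt' b) p3"
proof -
  obtain a1 a2 a3 b1 b2 b3 where p: "p1 = PP a1 b1" "p2 = PP a2 b2" "p3 = PP a3 b3"
    and neq: "a1 \<noteq> a2" "b1 \<noteq> b2" "b1 \<noteq> b3" "b2 \<noteq> b3"
    and aP: "a1 \<in> P" "a2 \<in> P" "a3 \<in> P" and bs: "{b1, b2, b3} = perp_set P' L' (f ` {a1, a2, a3})"
    using calL_three_points[OF Ln \<open>p1 \<noteq> p2\<close> \<open>p1 \<noteq> p3\<close> \<open>p2 \<noteq> p3\<close>] by metis
  have fa: "f a1 \<in> P'" "f a2 \<in> P'" "f a1 \<noteq> f a2"
    using f aP neq(1) by (auto simp: bij_betw_def inj_on_def)
  have calP: "(a', b') \<in> calP P L P' L' f" if "a' \<in> {a1, a2, a3}" "b' \<in> {b1, b2, b3}" for a' b'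
    using that aP bs unfolding calP_def perp_set_def by blast
  obtain c1 c2 where
    "collinear (bbL P L P' L' f) (Pt' b) c1" "collinear (bbL P L P' L' f) c1 p1"
    "collinear (bbL P L P' L' f) (Pt' b) c2" "collinear (bbL P L P' L' f) c2 p2"
    using d1 d2 unfolding dist2_def by blast
  then have "b \<in> perp P' L' (f a1)" "b \<in> perp P' L' (f a2)"
    using path_Pt'_PP_perp p by metis+
  then have "b \<in> perp_set P' L' {f a1, f a2}"
    using \<open>b \<in> P'\<close> unfolding mem_perp_set_pair_iff by blast
  moreover have "{b1, b2, b3} \<subseteq> perp_set P' L' {f a1, f a2}"
    using bs unfolding perp_set_def by auto
  ultimately have "b \<in> {b1, b2, b3}"
    using GQ22_mem_perp_set_pair[OF G' fa] neq(2-4) by simp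
  moreover have "b \<noteq> b1" "b \<noteq> b2"
    using d1 d2 collinear_Pt_PP(2)[OF calP] p unfolding dist2_def by auto
  ultimately show ?thesis using collinear_Pt_PP(2)[OF calP] p by auto
qed

theorem proposition4p7:
  fixes P :: "'a set" and L :: "'a set set"
    and P' :: "'b set" and L' :: "'b set set" and f :: "'a \<Rightarrow> 'b"
    and Ln :: "('a, 'b) bpt set" and \<alpha> p1 p2 p3 :: "('a, 'b) bpt"
  assumes "GQ22 P L" and "GQ22 P' L'" and "GQ_iso P L P' L' f"
    and "Ln \<in> calL P L P' L' f"
    and "\<alpha> \<in> Pt ` P \<union> Pt' ` P'"
    and "p1 \<in> Ln" and "p2 \<in> Ln" and "p3 \<in> Ln"
    and "p1 \<noteq> p2" and "p1 \<noteq> p3" and "p2 \<noteq> p3"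
    and "dist2 (bbL P L P' L' f) \<alpha> p1" and "dist2 (bbL P L P' L' f) \<alpha> p2"
  shows "collinear (bbL P L P' L' f) \<alpha> p3"
proof -
  \<comment> \<open>The axioms are needed only for \<open>S'\<close>; \<open>S\<close> enters only through the bijection \<open>f\<close>.\<close>
  have f: "bij_betw f P P'" using \<open>GQ_iso P L P' L' f\<close> unfolding GQ_iso_def by blast
  note line = assms(4,6-11)
  from \<open>\<alpha> \<in> Pt ` P \<union> Pt' ` P'\<close> show ?thesis
  proof
    assume "\<alpha> \<in> Pt ` P"
    then obtain a where "\<alpha> = Pt a" "a \<in> P" by blast
    then show ?thesis using dist2_Pt_calL_collinear[OF \<open>GQ22 P' L'\<close> f line] assms(12,13) by simp
  next
    assume "\<alpha> \<in> Pt' ` P'"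
    then obtain b where "\<alpha> = Pt' b" "b \<in> P'" by blast
    then show ?thesis using dist2_Pt'_calL_collinear[OF \<open>GQ22 P' L'\<close> f line] assms(12,13) by simp
  qed
qed

end
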